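(* Let $(G,P,g)$ be the manifold in the context and $D$ the connection defined there. Then $D$ is flat: its curvature tensor $D_xD_yz-D_yD_xz-D_{[x,y]}z$ vanishes identically.
   Context: $G$ is a 4-dimensional real connected Lie group with Lie algebra having a basis $\{X_1,\dots,X_4\}$ of left-invariant vector fields satisfying, for real numbers $\lambda_1,\dots,\lambda_4$: $[X_1,X_2]=-[X_3,X_4]=\lambda_1X_1+\lambda_2X_2+\lambda_3X_3+\lambda_4X_4$, $[X_1,X_3]=[X_2,X_4]=\lambda_4X_1-\lambda_3X_2+\lambda_2X_3-\lambda_1X_4$, $[X_2,X_3]=[X_1,X_4]=0$. $P$ is the left-invariant tensor with $PX_1=X_3$, $PX_2=X_4$, $PX_3=X_1$, $PX_4=X_2$, and $g$ the left-invariant metric making $\{X_i\}$ orthonormal. Let $\nabla$ be the Levi-Civita connection of $g$, $F(x,y,z)=g((\nabla_xP)y,z)$, $\theta(x)=\sum_iF(X_i,X_i,x)$ the Lee form, $\Omega$ the vector field with $g(\Omega,x)=\theta(x)$, and $D_xy=\nabla_xy+\frac14\{g(x,y)P\Omega-\theta(Py)x\}$. *)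

theory Defs
  imports "HOL-Analysis.Analysis"
begin

text \<open>Left-invariant vector fields on the 4-dimensional Lie group G are identified with
  their values at the identity, i.e. with the Lie algebra, modelled as \<open>real^4\<close>;
  the basis X_1,...,X_4 is the standard basis (index 4 of type \<open>4\<close> is the numeral 4 = 0).
  The metric g (making the X_i orthonormal) is the standard inner product.\<close>

definition Xb :: "4 \<Rightarrow> real^4" where
  "Xb i = axis i 1"

definition brb :: "real \<Rightarrow> real \<Rightarrow> real \<Rightarrow> real \<Rightarrow> 4 \<Rightarrow> 4 \<Rightarrow> real^4" where
  "brb l1 l2 l3 l4 i j =
     (let A = l1 *\<^sub>R Xb 1 + l2 *\<^sub>R Xb 2 + l3 *\<^sub>R Xb 3 + l4 *\<^sub>R Xb 4;
          B = l4 *\<^sub>R Xb 1 - l3 *\<^sub>R Xb 2 + l2 *\<^sub>R Xb 3 - l1 *\<^sub>R Xb 4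
      in if (i, j) = (1, 2) then A else if (i, j) = (2, 1) then - A
         else if (i, j) = (3, 4) then - A else if (i, j) = (4, 3) then A
         else if (i, j) = (1, 3) then B else if (i, j) = (3, 1) then - B
         else if (i, j) = (2, 4) then B else if (i, j) = (4, 2) then - B
         else 0)"

definition br :: "real \<Rightarrow> real \<Rightarrow> real \<Rightarrow> real \<Rightarrow> real^4 \<Rightarrow> real^4 \<Rightarrow> real^4" where
  "br l1 l2 l3 l4 x y = (\<Sum>i\<in>UNIV. \<Sum>j\<in>UNIV. (x $ i * y $ j) *\<^sub>R brb l1 l2 l3 l4 i j)"

text \<open>Levi-Civita connection on left-invariant fields (Koszul formula:
  2 g(\<nabla>_x y, z) = g([x,y],z) - g([y,z],x) + g([z,x],y)).\<close>
definition LC :: "real \<Rightarrow> real \<Rightarrow> real \<Rightarrow> real \<Rightarrow> real^4 \<Rightarrow> real^4 \<Rightarrow> real^4" where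
  "LC l1 l2 l3 l4 x y = (\<Sum>k\<in>UNIV.
      ((br l1 l2 l3 l4 x y \<bullet> Xb k - br l1 l2 l3 l4 y (Xb k) \<bullet> x
        + br l1 l2 l3 l4 (Xb k) x \<bullet> y) / 2) *\<^sub>R Xb k)"

definition Pm :: "real^4 \<Rightarrow> real^4" where
  "Pm x = x $ 1 *\<^sub>R Xb 3 + x $ 2 *\<^sub>R Xb 4 + x $ 3 *\<^sub>R Xb 1 + x $ 4 *\<^sub>R Xb 2"

definition nablaP :: "real \<Rightarrow> real \<Rightarrow> real \<Rightarrow> real \<Rightarrow> real^4 \<Rightarrow> real^4 \<Rightarrow> real^4" where
  "nablaP l1 l2 l3 l4 x y = LC l1 l2 l3 l4 x (Pm y) - Pm (LC l1 l2 l3 l4 x y)"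

definition Ften :: "real \<Rightarrow> real \<Rightarrow> real \<Rightarrow> real \<Rightarrow> real^4 \<Rightarrow> real^4 \<Rightarrow> real^4 \<Rightarrow> real" where
  "Ften l1 l2 l3 l4 x y z = nablaP l1 l2 l3 l4 x y \<bullet> z"

definition theta :: "real \<Rightarrow> real \<Rightarrow> real \<Rightarrow> real \<Rightarrow> real^4 \<Rightarrow> real" where
  "theta l1 l2 l3 l4 x = (\<Sum>i\<in>UNIV. Ften l1 l2 l3 l4 (Xb i) (Xb i) x)"

definition Omega :: "real \<Rightarrow> real \<Rightarrow> real \<Rightarrow> real \<Rightarrow> real^4" where
  "Omega l1 l2 l3 l4 = (\<Sum>k\<in>UNIV. theta l1 l2 l3 l4 (Xb k) *\<^sub>R Xb k)"

definition Dc :: "real \<Rightarrow> real \<Rightarrow> real \<Rightarrow> real \<Rightarrow> real^4 \<Rightarrow> real^4 \<Rightarrow> real^4" where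
  "Dc l1 l2 l3 l4 x y = LC l1 l2 l3 l4 x y
     + (1/4) *\<^sub>R ((x \<bullet> y) *\<^sub>R Pm (Omega l1 l2 l3 l4) - theta l1 l2 l3 l4 (Pm y) *\<^sub>R x)"

definition curvD :: "real \<Rightarrow> real \<Rightarrow> real \<Rightarrow> real \<Rightarrow> real^4 \<Rightarrow> real^4 \<Rightarrow> real^4 \<Rightarrow> real^4" where
  "curvD l1 l2 l3 l4 x y z = Dc l1 l2 l3 l4 x (Dc l1 l2 l3 l4 y z)
     - Dc l1 l2 l3 l4 y (Dc l1 l2 l3 l4 x z) - Dc l1 l2 l3 l4 (br l1 l2 l3 l4 x y) z"

end

theory Submission
  imports Defs
begin

text \<open>
  The proof computes D in closed form and finds
  that it has rank one in its first argument: D_x y = \<alpha>(x) J y, where \<alpha> is the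
  linear form \<alpha>(x) = l3 x1 + l4 x2 - l1 x3 - l2 x4 and J is a fixed linear map.
  For any connection of this shape the curvature reduces to -\<alpha>([x,y]) J z,
  because the two second-order terms \<alpha>(x)\<alpha>(y) J(J z) cancel.  Finally every
  bracket is a combination of the two vectors A = \<Sum> l_i X_i and
  B = l4 X1 - l3 X2 + l2 X3 - l1 X4 spanning the derived algebra, and \<alpha>
  annihilates both, so \<alpha>([x,y]) = 0.
\<close>

lemma curvature_vanishes_for_rank_one_connection:
  fixes J :: "'a::real_vector \<Rightarrow> 'a" and \<alpha> :: "'a \<Rightarrow> real"
  assumes J: "linear J"
    and D: "\<And>u v. D u v = \<alpha> u *\<^sub>R J v"
    and \<alpha>_bracket: "\<alpha> (bracket x y) = 0"
  shows "D x (D y z) - D y (D x z) - D (bracket x y) z = 0"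
proof -
  have "D x (D y z) = (\<alpha> x * \<alpha> y) *\<^sub>R J (J z)"
    by (simp add: D linear_cmul[OF J])
  moreover have "D y (D x z) = (\<alpha> x * \<alpha> y) *\<^sub>R J (J z)"
    by (simp add: D linear_cmul[OF J])
  moreover have "D (bracket x y) z = 0"
    by (simp add: D \<alpha>_bracket)
  ultimately show ?thesis by simp
qed

lemma Xb_component: "Xb i $ j = (if j = i then 1 else 0)"
  by (simp add: Xb_def axis_def)

lemma inner_real4: "(x::real^4) \<bullet> y = x$1*y$1 + x$2*y$2 + x$3*y$3 + x$4*y$4"
  by (simp add: inner_vec_def sum_4)

definition vecA :: "real \<Rightarrow> real \<Rightarrow> real \<Rightarrow> real \<Rightarrow> real^4" where
  "vecA l1 l2 l3 l4 = (\<chi> i. if i=1 then l1 else if i=2 then l2 else if i=3 then l3 else l4)"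

definition vecB :: "real \<Rightarrow> real \<Rightarrow> real \<Rightarrow> real \<Rightarrow> real^4" where
  "vecB l1 l2 l3 l4 = (\<chi> i. if i=1 then l4 else if i=2 then -l3 else if i=3 then l2 else -l1)"

lemma br_closed_form:
  "br l1 l2 l3 l4 x y =
     (x$1*y$2 - x$2*y$1 - x$3*y$4 + x$4*y$3) *\<^sub>R vecA l1 l2 l3 l4
   + (x$1*y$3 - x$3*y$1 + x$2*y$4 - x$4*y$2) *\<^sub>R vecB l1 l2 l3 l4"
  unfolding br_def sum_4 brb_def Let_def vecA_def vecB_def
  by (simp add: vec_eq_iff forall_4 Xb_component algebra_simps)

definition Jm :: "real^4 \<Rightarrow> real^4" where
  "Jm y = (\<chi> i. if i=1 then y$4 else if i=2 then -y$3 else if i=3 then y$2 else -y$1)"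

lemma linear_Jm: "linear Jm"
  by (rule linearI) (simp_all add: Jm_def vec_eq_iff)

definition alpha :: "real \<Rightarrow> real \<Rightarrow> real \<Rightarrow> real \<Rightarrow> real^4 \<Rightarrow> real" where
  "alpha l1 l2 l3 l4 x = l3*x$1 + l4*x$2 - l1*x$3 - l2*x$4"

text \<open>\<alpha> annihilates A and B, hence every bracket.\<close>
lemma alpha_br: "alpha l1 l2 l3 l4 (br l1 l2 l3 l4 x y) = 0"
  by (simp add: alpha_def br_closed_form vecA_def vecB_def algebra_simps)

lemma LC_component:
  "LC l1 l2 l3 l4 x y $ k = (br l1 l2 l3 l4 x y \<bullet> Xb k - br l1 l2 l3 l4 y (Xb k) \<bullet> x
        + br l1 l2 l3 l4 (Xb k) x \<bullet> y) / 2"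
  unfolding LC_def sum_4 using exhaust_4[of k] by (auto simp: Xb_component)

lemma LC_closed_form:
  "LC l1 l2 l3 l4 x y = alpha l1 l2 l3 l4 x *\<^sub>R Jm y
     - (x \<bullet> y) *\<^sub>R (\<chi> i. if i=1 then -l2 else if i=2 then l1 else if i=3 then l4 else -l3)
     + (l4*y$3 - l3*y$4 - l2*y$1 + l1*y$2) *\<^sub>R x"
  unfolding vec_eq_iff forall_4 LC_component br_closed_form inner_real4 Jm_def alpha_def
    vecA_def vecB_def
  by (simp add: Xb_component field_simps; simp add: algebra_simps)

lemma Pm_component: "Pm x $ 1 = x$3" "Pm x $ 2 = x$4" "Pm x $ 3 = x$1" "Pm x $ 4 = x$2"
  by (simp_all add: Pm_def Xb_component)

lemma theta_closed_form: "theta l1 l2 l3 l4 x = 4*(l4*x$1 - l3*x$2 - l2*x$3 + l1*x$4)"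
  unfolding theta_def sum_4 Ften_def nablaP_def inner_real4
  by (simp add: LC_closed_form alpha_def Pm_component Jm_def Xb_component inner_real4
      algebra_simps)

lemma Omega_closed_form:
  "Omega l1 l2 l3 l4 =
     (\<chi> i. if i=1 then 4*l4 else if i=2 then -4*l3 else if i=3 then -4*l2 else 4*l1)"
  unfolding Omega_def sum_4 theta_closed_form vec_eq_iff forall_4 by (simp add: Xb_component)

text \<open>The correction term of D cancels the last two terms of the Levi-Civita
  connection, leaving D_x y = \<alpha>(x) J y.\<close>
lemma Dc_closed_form: "Dc l1 l2 l3 l4 x y = alpha l1 l2 l3 l4 x *\<^sub>R Jm y"
  unfolding Dc_def LC_closed_form Omega_closed_form theta_closed_form vec_eq_iff forall_4
  by (simp add: Pm_component Jm_def algebra_simps)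

theorem proposition8p5:
  fixes l1 l2 l3 l4 :: real and x y z :: "real^4"
  shows "curvD l1 l2 l3 l4 x y z = 0"
  unfolding curvD_def
  using curvature_vanishes_for_rank_one_connection
      [where J = Jm and D = "Dc l1 l2 l3 l4" and \<alpha> = "alpha l1 l2 l3 l4"
        and bracket = "br l1 l2 l3 l4", OF linear_Jm Dc_closed_form alpha_br] .

end
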